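(* Let $H\in C^\infty(\mathbb{R}/\mathbb{Z}\times\mathbb{D})$ vanish identically on $\mathbb{R}/\mathbb{Z}\times\partial\mathbb{D}$. Then there exists an approximating sequence $(H_n)_{n\in\mathbb{N}}$ for $H$ such that (1) $\mathrm{supp}\,H_n\subset\mathbb{R}/\mathbb{Z}\times\mathbb{D}_{1+1/n}$ for every $n$, and (2) $\sup_{n\in\mathbb{N}}\|\nabla H_n\|_{C^0(\mathbb{R}/\mathbb{Z}\times(\mathbb{R}^2\setminus\mathbb{D}))}<\infty$.
   Context: $\mathbb{D}\subset\mathbb{R}^2$ is the closed unit disc and $\mathbb{D}_R$ the closed disc of radius $R$ centered at $0$; $\nabla$ is the spatial gradient. An approximating sequence for $H$ is a sequence $H_n\in C^\infty_c(\mathbb{R}/\mathbb{Z}\times\mathbb{R}^2)$ such that $H_n$ restricted to $\mathbb{R}/\mathbb{Z}\times\mathbb{D}$ equals $H$ and $\lim_{n\to\infty}\|H_n\|_{C^0(\mathbb{R}/\mathbb{Z}\times(\mathbb{R}^2\setminus\mathbb{D}))}=0$. *)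

theory Defs
  imports "HOL-Analysis.Analysis"
begin

fun k_smooth :: "nat \<Rightarrow> ('a::euclidean_space \<Rightarrow> real) \<Rightarrow> bool" where
  "k_smooth 0 f = continuous_on UNIV f"
| "k_smooth (Suc k) f = (continuous_on UNIV f \<and> f differentiable_on UNIV \<and>
      (\<forall>v. k_smooth k (\<lambda>x. frechet_derivative f (at x) v)))"

definition smooth :: "('a::euclidean_space \<Rightarrow> real) \<Rightarrow> bool" where
  "smooth f \<longleftrightarrow> (\<forall>k. k_smooth k f)"

text \<open>Points are pairs (t, x) with t the time coordinate (1-periodic, i.e. R/Z) and x in R^2.\<close>
definition time_periodic :: "(real \<times> (real^2) \<Rightarrow> real) \<Rightarrow> bool" where
  "time_periodic f \<longleftrightarrow> (\<forall>t x. f (t + 1, x) = f (t, x))"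

definition supp :: "(real \<times> (real^2) \<Rightarrow> real) \<Rightarrow> (real \<times> (real^2)) set" where
  "supp f = closure {p. f p \<noteq> 0}"

definition spatial_grad :: "(real \<times> (real^2) \<Rightarrow> real) \<Rightarrow> real \<Rightarrow> real^2 \<Rightarrow> real^2" where
  "spatial_grad f t x = (\<chi> i. frechet_derivative (\<lambda>y. f (t, y)) (at x) (axis i 1))"

text \<open>C^\<infinity>_c(R/Z x R^2): smooth, 1-periodic in time, support compact modulo time.\<close>
definition smooth_compact_supp :: "(real \<times> (real^2) \<Rightarrow> real) \<Rightarrow> bool" where
  "smooth_compact_supp f \<longleftrightarrow> smooth f \<and> time_periodic f \<and>
     (\<exists>R. supp f \<subseteq> UNIV \<times> cball 0 R)"

definition approximating_sequence ::
  "(nat \<Rightarrow> real \<times> (real^2) \<Rightarrow> real) \<Rightarrow> (real \<times> (real^2) \<Rightarrow> real) \<Rightarrow> bool" where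
  "approximating_sequence Hs H \<longleftrightarrow>
     (\<forall>n. smooth_compact_supp (Hs n)) \<and>
     (\<forall>n t x. norm x \<le> 1 \<longrightarrow> Hs n (t, x) = H (t, x)) \<and>
     (\<forall>e>0. \<exists>N. \<forall>n\<ge>N. \<forall>t x. norm x > 1 \<longrightarrow> \<bar>Hs n (t, x)\<bar> \<le> e)"

text \<open>H in C^\<infinity>(R/Z x D): restriction to R/Z x D of a smooth 1-periodic function on R x R^2.\<close>
definition smooth_on_cyl_disc :: "(real \<times> (real^2) \<Rightarrow> real) \<Rightarrow> bool" where
  "smooth_on_cyl_disc H \<longleftrightarrow>
     (\<forall>t x. norm x \<le> 1 \<longrightarrow> H (t + 1, x) = H (t, x)) \<and>
     (\<exists>G. smooth G \<and> time_periodic G \<and> (\<forall>t x. norm x \<le> 1 \<longrightarrow> G (t, x) = H (t, x)))"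

end

theory Submission
  imports Defs "HOL-Computational_Algebra.Polynomial"
begin

text \<open>Extend \<open>H\<close> to a smooth 1-periodic \<open>G\<close> and put \<open>H\<^sub>n = G \<cdot> \<psi>((n+1)(|x|\<^sup>2 - 1))\<close> with a
  smooth cutoff \<open>\<psi>\<close> that is 1 on \<open>(-\<infinity>, 0]\<close> and 0 on \<open>[1, \<infinity>)\<close>; then \<open>H\<^sub>n = H\<close> on the disc
  and \<open>H\<^sub>n\<close> vanishes for \<open>|x|\<^sup>2 \<ge> 1 + 1/(n+1)\<close>. Since \<open>G\<close> vanishes on the unit circle, the
  mean value theorem gives \<open>|G(t,x)| \<le> K(|x| - 1) \<le> K/(n+1)\<close> on the support outside the disc.
  This yields the uniform convergence to 0, and it exactly compensates the factor \<open>n+1\<close> in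
  the gradient of the cutoff, so the gradients stay bounded.\<close>

lemma k_smooth_imp_continuous_on: "k_smooth k f \<Longrightarrow> continuous_on UNIV f"
  by (cases k) auto

lemma k_smooth_SucD: "k_smooth (Suc k) f \<Longrightarrow> k_smooth k f"
proof (induction k arbitrary: f)
  case 0
  then show ?case by simp
next
  case (Suc k)
  then show ?case by (metis k_smooth.simps(2))
qed

lemma differentiable_on_UNIV_frechet_derivative:
  "f differentiable_on UNIV \<Longrightarrow> (f has_derivative frechet_derivative f (at x)) (at x)"
  by (meson UNIV_I differentiable_on_def frechet_derivative_works at_within_open open_UNIV)

lemma smooth_imp_differentiable_on: "smooth f \<Longrightarrow> f differentiable_on UNIV"
  unfolding smooth_def by (metis k_smooth.simps(2))

lemma k_smooth_const: "k_smooth k (\<lambda>x. c)"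
proof (induction k arbitrary: c)
  case 0
  then show ?case by simp
next
  case (Suc k)
  have "frechet_derivative (\<lambda>x::'a. c) (at x) = (\<lambda>v. 0)" for x
    using frechet_derivative_at[OF has_derivative_const] by metis
  then show ?case using Suc by (simp add: differentiable_on_def)
qed

lemma k_smooth_linear:
  fixes f :: "'a::euclidean_space \<Rightarrow> real"
  assumes "linear f"
  shows "k_smooth k f"
proof -
  have bl: "bounded_linear f" using assms by (simp add: linear_conv_bounded_linear)
  show ?thesis
  proof (cases k)
    case 0
    then show ?thesis using bl by (simp add: linear_continuous_on)
  next
    case (Suc m)
    have "frechet_derivative f (at x) = f" for x
      using frechet_derivative_at[OF bounded_linear_imp_has_derivative[OF bl]] by metis
    moreover have "f differentiable_on UNIV"
      using bl bounded_linear_imp_differentiable differentiable_at_imp_differentiable_on by blast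
    ultimately show ?thesis using Suc bl by (simp add: linear_continuous_on k_smooth_const)
  qed
qed

lemma k_smooth_add: "k_smooth k f \<Longrightarrow> k_smooth k g \<Longrightarrow> k_smooth k (\<lambda>x. f x + g x)"
proof (induction k arbitrary: f g)
  case 0
  then show ?case by (simp add: continuous_on_add)
next
  case (Suc k)
  have f: "f differentiable_on UNIV" and g: "g differentiable_on UNIV" using Suc.prems by auto
  have "frechet_derivative (\<lambda>x. f x + g x) (at x)
      = (\<lambda>v. frechet_derivative f (at x) v + frechet_derivative g (at x) v)" for x
    by (rule frechet_derivative_at[symmetric])
      (intro has_derivative_add differentiable_on_UNIV_frechet_derivative f g)
  then show ?case using Suc f g by (simp add: continuous_on_add differentiable_on_add)
qed

lemma k_smooth_mult: "k_smooth k f \<Longrightarrow> k_smooth k g \<Longrightarrow> k_smooth k (\<lambda>x. f x * g x)"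
proof (induction k arbitrary: f g)
  case 0
  then show ?case by (simp add: continuous_on_mult)
next
  case (Suc k)
  have f: "f differentiable_on UNIV" and g: "g differentiable_on UNIV" using Suc.prems by auto
  have "frechet_derivative (\<lambda>x. f x * g x) (at x)
      = (\<lambda>v. f x * frechet_derivative g (at x) v + frechet_derivative f (at x) v * g x)" for x
    by (rule frechet_derivative_at[symmetric])
      (intro has_derivative_mult differentiable_on_UNIV_frechet_derivative f g)
  moreover have "k_smooth k f" "k_smooth k g" using Suc.prems k_smooth_SucD by blast+
  ultimately show ?case
    using Suc f g by (simp add: continuous_on_mult differentiable_on_mult k_smooth_add)
qed

lemma k_smooth_sum:
  "finite I \<Longrightarrow> (\<And>i. i \<in> I \<Longrightarrow> k_smooth k (f i)) \<Longrightarrow> k_smooth k (\<lambda>x. \<Sum>i\<in>I. f i x)"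
  by (induction I rule: finite_induct) (auto intro: k_smooth_add k_smooth_const)

text \<open>Needed besides \<^const>\<open>k_smooth\<close> because the reciprocal, used to build the cutoff,
  is smooth only on \<open>(0, \<infinity>)\<close>.\<close>

fun k_smooth_on :: "nat \<Rightarrow> real set \<Rightarrow> (real \<Rightarrow> real) \<Rightarrow> bool" where
  "k_smooth_on 0 S f = continuous_on S f"
| "k_smooth_on (Suc k) S f =
    (continuous_on S f \<and> (\<forall>x\<in>S. f differentiable at x) \<and> k_smooth_on k S (deriv f))"

lemma k_smooth_compose:
  assumes "open S" "\<And>x. u x \<in> S"
  shows "k_smooth_on k S \<phi> \<Longrightarrow> k_smooth k u \<Longrightarrow> k_smooth k (\<lambda>x. \<phi> (u x))"
proof (induction k arbitrary: \<phi>)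
  case 0
  then show ?case using assms by (auto intro!: continuous_on_compose2[of S \<phi> UNIV u])
next
  case (Suc k)
  have u: "u differentiable_on UNIV" using Suc.prems by auto
  have "(\<phi> has_real_derivative deriv \<phi> (u x)) (at (u x))" for x
    using Suc.prems assms DERIV_deriv_iff_real_differentiable by auto
  then have D: "((\<lambda>x. \<phi> (u x)) has_derivative
      (\<lambda>v. deriv \<phi> (u x) * frechet_derivative u (at x) v)) (at x)" for x
    using has_derivative_compose[OF differentiable_on_UNIV_frechet_derivative[OF u]]
    unfolding has_field_derivative_def by blast
  then have "frechet_derivative (\<lambda>x. \<phi> (u x)) (at x)
      = (\<lambda>v. deriv \<phi> (u x) * frechet_derivative u (at x) v)" for x
    by (metis frechet_derivative_at)
  moreover have "(\<lambda>x. \<phi> (u x)) differentiable_on UNIV"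
    using D differentiable_at_imp_differentiable_on differentiable_def by blast
  moreover have "continuous_on UNIV (\<lambda>x. \<phi> (u x))"
    using Suc.prems assms by (intro continuous_on_compose2[of S \<phi> UNIV u]) auto
  moreover have "k_smooth k (\<lambda>x. deriv \<phi> (u x))"
    using Suc k_smooth_SucD by auto
  ultimately show ?case using Suc.prems by (auto intro: k_smooth_mult)
qed

lemma k_smooth_on_cong:
  "open S \<Longrightarrow> (\<And>x. x \<in> S \<Longrightarrow> f x = g x) \<Longrightarrow> k_smooth_on k S f \<Longrightarrow> k_smooth_on k S g"
proof (induction k arbitrary: f g)
  case 0
  then show ?case by (metis continuous_on_cong k_smooth_on.simps(1))
next
  case (Suc k)
  have ev: "eventually (\<lambda>y. f y = g y) (nhds x)" if "x \<in> S" for x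
    using Suc.prems(1,2) that eventually_nhds by blast
  have "continuous_on S g" using Suc.prems by (metis continuous_on_cong k_smooth_on.simps(2))
  moreover have "g differentiable at x" if "x \<in> S" for x
  proof -
    have "DERIV f x :> deriv f x"
      using Suc.prems that DERIV_deriv_iff_real_differentiable by auto
    then have "DERIV g x :> deriv f x" using DERIV_cong_ev[OF refl ev[OF that] refl] by simp
    then show ?thesis using real_differentiable_def by blast
  qed
  moreover have "k_smooth_on k S (deriv g)"
    using Suc.IH[of "deriv f" "deriv g"] Suc.prems deriv_cong_ev[OF ev] by auto
  ultimately show ?case by simp
qed

lemma k_smooth_on_SucI:
  assumes "open S" "\<And>x. x \<in> S \<Longrightarrow> (f has_real_derivative f' x) (at x)" "k_smooth_on k S f'"
  shows "k_smooth_on (Suc k) S f"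
proof -
  have "continuous_on S f"
    using assms by (meson DERIV_isCont continuous_at_imp_continuous_on)
  moreover have "\<forall>x\<in>S. f differentiable at x" using assms real_differentiable_def by blast
  moreover have "k_smooth_on k S (deriv f)"
    using k_smooth_on_cong[OF assms(1) _ assms(3), of "deriv f"] assms(2) DERIV_imp_deriv by metis
  ultimately show ?thesis by simp
qed

lemma k_smooth_on_divide_power: "k_smooth_on k {0<..} (\<lambda>x. c / x ^ m)"
proof (induction k arbitrary: c m)
  case 0
  then show ?case by (simp, intro continuous_intros) auto
next
  case (Suc k)
  have "((\<lambda>x. c / x ^ m) has_real_derivative (- (c * real m) / x ^ Suc m)) (at x)"
    if "x \<in> {0<..}" for x
  proof -
    have "x \<noteq> 0" using that by simp
    have "((\<lambda>x. c / x ^ m) has_real_derivative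
        (- (c * (real m * x ^ (m - 1))) / (x ^ m * x ^ m))) (at x)"
      using \<open>x \<noteq> 0\<close> by (auto intro!: derivative_eq_intros)
    moreover have "- (c * (real m * x ^ (m - 1))) / (x ^ m * x ^ m) = - (c * real m) / x ^ Suc m"
      using \<open>x \<noteq> 0\<close> by (cases m) (auto simp: field_simps)
    ultimately show ?thesis by simp
  qed
  then show ?case by (intro k_smooth_on_SucI[OF _ _ Suc.IH[of "- (c * real m)" "Suc m"]]) auto
qed

lemma k_smooth_imp_k_smooth_on: "k_smooth k (f::real \<Rightarrow> real) \<Longrightarrow> k_smooth_on k UNIV f"
proof (induction k arbitrary: f)
  case 0
  then show ?case by simp
next
  case (Suc k)
  have d: "f differentiable at x" for x using Suc.prems by (simp add: differentiable_on_def)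
  have "frechet_derivative f (at x) = (*) (deriv f x)" for x
    using frechet_derivative_at d DERIV_deriv_iff_real_differentiable has_field_derivative_def
    by metis
  then have "deriv f = (\<lambda>x. frechet_derivative f (at x) 1)" by auto
  then show ?case using Suc d by auto
qed

text \<open>The class of functions \<open>p(1/x) e\<^sup>-\<^sup>1\<^sup>/\<^sup>x\<close> (extended by 0 for \<open>x \<le> 0\<close>) is closed under
  differentiation, so each of them, in particular \<open>e\<^sup>-\<^sup>1\<^sup>/\<^sup>x\<close>, is smooth.\<close>

definition flat :: "real poly \<Rightarrow> real \<Rightarrow> real" where
  "flat p x = (if x > 0 then poly p (inverse x) * exp (- inverse x) else 0)"

definition flat_deriv_poly :: "real poly \<Rightarrow> real poly" where
  "flat_deriv_poly p = [:0, 0, 1:] * (p - pderiv p)"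

lemma has_real_derivative_poly_inverse_exp:
  assumes "x > 0"
  shows "((\<lambda>x. poly p (inverse x) * exp (- inverse x)) has_real_derivative
           poly (flat_deriv_poly p) (inverse x) * exp (- inverse x)) (at x)"
proof -
  have x: "x \<noteq> 0" using assms by simp
  have "DERIV (\<lambda>x. poly p (inverse x)) x :>
      poly (pderiv p) (inverse x) * (- (inverse x ^ Suc (Suc 0)))"
    by (rule DERIV_chain2[OF poly_DERIV DERIV_inverse[OF x]])
  moreover have "DERIV (\<lambda>x. exp (- inverse x)) x :>
      exp (- inverse x) * (- (- (inverse x ^ Suc (Suc 0))))"
    by (rule DERIV_chain2[OF DERIV_exp DERIV_minus[OF DERIV_inverse[OF x]]])
  ultimately show ?thesis
    by (rule DERIV_cong[OF DERIV_mult])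
      (simp add: flat_deriv_poly_def algebra_simps power2_eq_square)
qed

lemma tendsto_poly_times_exp_neg:
  fixes p :: "real poly"
  shows "((\<lambda>y. poly p y * exp (- y) * y) \<longlongrightarrow> 0) at_top"
proof -
  have "((\<lambda>y. \<Sum>i\<le>degree p. coeff p i * (y ^ Suc i / exp y)) \<longlongrightarrow>
      (\<Sum>i\<le>degree p. coeff p i * 0)) at_top"
    by (intro tendsto_intros tendsto_power_div_exp_0)
  moreover have "(\<Sum>i\<le>degree p. coeff p i * (y ^ Suc i / exp y)) = poly p y * exp (- y) * y"
    for y :: real
    by (simp add: poly_altdef exp_minus field_simps sum_distrib_left sum_divide_distrib)
  ultimately show ?thesis by simp
qed

lemma flat_has_real_derivative_0: "(flat p has_real_derivative 0) (at 0)"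
proof -
  have "((\<lambda>y. (flat p y - flat p 0) / (y - 0)) \<longlongrightarrow> 0) (at 0)"
  proof (rule filterlim_split_at)
    have "eventually (\<lambda>y. 0 = (flat p y - flat p 0) / (y - 0)) (at_left (0::real))"
      unfolding eventually_at_left_field by (rule exI[of _ "-1"]) (auto simp: flat_def)
    then show "((\<lambda>y. (flat p y - flat p 0) / (y - 0)) \<longlongrightarrow> 0) (at_left 0)"
      by (rule Lim_transform_eventually[OF tendsto_const])
  next
    have "eventually (\<lambda>y. poly p y * exp (- y) * y
        = (flat p (inverse y) - flat p 0) / (inverse y - 0)) at_top"
      using eventually_gt_at_top[of "0::real"] by eventually_elim (simp add: flat_def field_simps)
    then have "((\<lambda>y. (flat p (inverse y) - flat p 0) / (inverse y - 0)) \<longlongrightarrow> 0) at_top"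
      by (rule Lim_transform_eventually[OF tendsto_poly_times_exp_neg])
    then show "((\<lambda>y. (flat p y - flat p 0) / (y - 0)) \<longlongrightarrow> 0) (at_right 0)"
      by (simp add: filterlim_at_right_to_top)
  qed
  then show ?thesis by (simp add: has_field_derivative_iff)
qed

lemma flat_has_real_derivative: "(flat p has_real_derivative flat (flat_deriv_poly p) x) (at x)"
proof (cases x "0::real" rule: linorder_cases)
  case less
  have "(flat p has_real_derivative 0) (at x)"
    by (rule has_field_derivative_transform_within_open[OF DERIV_const open_lessThan, of x 0])
      (use less in \<open>auto simp: flat_def\<close>)
  then show ?thesis using less by (simp add: flat_def)
next
  case equal
  then show ?thesis using flat_has_real_derivative_0 by (simp add: flat_def)
next
  case greater
  have "(flat p has_real_derivative poly (flat_deriv_poly p) (inverse x) * exp (- inverse x)) (at x)"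
    by (rule has_field_derivative_transform_within_open[OF
          has_real_derivative_poly_inverse_exp[OF greater] open_greaterThan, of 0])
      (use greater in \<open>auto simp: flat_def\<close>)
  then show ?thesis using greater by (simp add: flat_def)
qed

lemma k_smooth_on_flat: "k_smooth_on k UNIV (flat p)"
proof (induction k arbitrary: p)
  case 0
  have "isCont (flat p) x" for x using DERIV_isCont[OF flat_has_real_derivative] .
  then show ?case by (simp add: continuous_at_imp_continuous_on)
next
  case (Suc k)
  show ?case by (rule k_smooth_on_SucI[OF _ flat_has_real_derivative Suc.IH]) auto
qed

definition cutoff :: "real \<Rightarrow> real" where
  "cutoff u = flat 1 (1 - u) / (flat 1 (1 - u) + flat 1 u)"

lemma flat_1_pos: "x > 0 \<Longrightarrow> flat 1 x > 0"
  by (simp add: flat_def)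

lemma flat_1_nonneg: "flat 1 x \<ge> 0"
  by (simp add: flat_def)

lemma flat_1_eq_0: "x \<le> 0 \<Longrightarrow> flat 1 x = 0"
  by (simp add: flat_def)

lemma cutoff_denominator_pos: "flat 1 (1 - u) + flat 1 u > 0"
  using flat_1_pos[of "1 - u"] flat_1_nonneg[of u] flat_1_pos[of u] flat_1_nonneg[of "1 - u"]
  by (cases "u < 1") auto

lemma cutoff_eq_1: "u \<le> 0 \<Longrightarrow> cutoff u = 1"
  using flat_1_eq_0[of u] flat_1_pos[of "1 - u"] by (simp add: cutoff_def)

lemma cutoff_eq_0: "u \<ge> 1 \<Longrightarrow> cutoff u = 0"
  using flat_1_eq_0[of "1 - u"] by (simp add: cutoff_def)

lemma abs_cutoff_le_1: "\<bar>cutoff u\<bar> \<le> 1"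
  using cutoff_denominator_pos[of u] flat_1_nonneg[of u] flat_1_nonneg[of "1 - u"]
  by (simp add: cutoff_def divide_le_eq_1)

lemma k_smooth_cutoff: "k_smooth k cutoff"
proof -
  have "k_smooth k (\<lambda>u::real. 1 + (- u))"
    by (intro k_smooth_add k_smooth_const k_smooth_linear) (simp add: linear_uminus)
  then have a: "k_smooth k (\<lambda>u. flat 1 (1 - u))"
    using k_smooth_compose[OF open_UNIV UNIV_I k_smooth_on_flat] by simp
  have b: "k_smooth k (\<lambda>u. flat 1 u)"
    using k_smooth_compose[OF open_UNIV UNIV_I k_smooth_on_flat k_smooth_linear[OF linear_ident]] .
  have "k_smooth k (\<lambda>u. 1 / (flat 1 (1 - u) + flat 1 u) ^ 1)"
    by (rule k_smooth_compose[OF open_greaterThan _ k_smooth_on_divide_power k_smooth_add[OF a b]])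
      (use cutoff_denominator_pos in auto)
  then have "k_smooth k (\<lambda>u. flat 1 (1 - u) * (1 / (flat 1 (1 - u) + flat 1 u) ^ 1))"
    by (rule k_smooth_mult[OF a])
  then show ?thesis by (simp add: cutoff_def[abs_def])
qed

lemma cutoff_has_real_derivative: "(cutoff has_real_derivative deriv cutoff u) (at u)"
  using k_smooth_imp_k_smooth_on[OF k_smooth_cutoff, of 1] DERIV_deriv_iff_real_differentiable
  by auto

lemma deriv_cutoff_eq_0:
  assumes "u \<notin> {0..1}"
  shows "deriv cutoff u = 0"
proof -
  consider "u < 0" | "u > 1" using assms by fastforce
  then have "(cutoff has_real_derivative 0) (at u)"
  proof cases
    case 1
    then show ?thesis
      by (intro has_field_derivative_transform_within_open[OF DERIV_const open_lessThan, of u 0])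
        (auto simp: cutoff_eq_1)
  next
    case 2
    then show ?thesis
      by (intro has_field_derivative_transform_within_open[OF DERIV_const open_greaterThan, of u 1])
        (auto simp: cutoff_eq_0)
  qed
  then show ?thesis by (rule DERIV_imp_deriv)
qed

lemma deriv_cutoff_bounded: "\<exists>M. \<forall>u. \<bar>deriv cutoff u\<bar> \<le> M"
proof -
  have "continuous_on UNIV (deriv cutoff)"
    using k_smooth_imp_k_smooth_on[OF k_smooth_cutoff, of 2] by (simp add: numeral_2_eq_2)
  then have "compact (deriv cutoff ` {0..1})"
    by (rule compact_continuous_image[OF continuous_on_subset]) auto
  then obtain M where M: "\<forall>y\<in>deriv cutoff ` {0..1}. norm y \<le> M"
    using compact_imp_bounded bounded_iff by metis
  then have "\<bar>deriv cutoff u\<bar> \<le> M" for u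
    using M[rule_format, of "deriv cutoff 0"] deriv_cutoff_eq_0[of u]
    by (cases "u \<in> {0..1}") fastforce+
  then show ?thesis by blast
qed

lemma time_periodic_shift:
  assumes "time_periodic G"
  shows "G (t + of_int k, x) = G (t, x)"
proof (induction k rule: int_induct[of _ 0])
  case (step1 i)
  then show ?case using assms[unfolded time_periodic_def, rule_format, of "t + of_int i"]
    by (simp add: add.assoc)
next
  case (step2 i)
  then show ?case using assms[unfolded time_periodic_def, rule_format, of "t + of_int (i - 1)"]
    by (simp add: add.assoc)
qed simp

lemma time_periodic_frac: "time_periodic G \<Longrightarrow> G (t, x) = G (frac t, x)"
  using time_periodic_shift[of G "frac t" "\<lfloor>t\<rfloor>"] by (simp add: frac_def)

lemma slice_has_derivative:
  fixes G :: "'a::real_normed_vector \<times> 'b::real_normed_vector \<Rightarrow> 'c::real_normed_vector"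
  assumes "G differentiable_on UNIV"
  shows "((\<lambda>y. G (t, y)) has_derivative (\<lambda>v. frechet_derivative G (at (t, x)) (0, v))) (at x)"
proof -
  have "((\<lambda>y. (t, y)) has_derivative (\<lambda>v. (0, v))) (at x)"
    by (intro has_derivative_Pair has_derivative_const has_derivative_ident)
  from has_derivative_compose[OF this differentiable_on_UNIV_frechet_derivative[OF assms]]
  show ?thesis by simp
qed

lemma abs_linear_le_Basis_sum:
  fixes L :: "'a::euclidean_space \<Rightarrow> real"
  assumes "linear L"
  shows "\<bar>L v\<bar> \<le> norm v * (\<Sum>b\<in>Basis. \<bar>L b\<bar>)"
proof -
  have "L v = (\<Sum>b\<in>Basis. (v \<bullet> b) * L b)"
    by (subst euclidean_representation[symmetric, of v])
      (simp add: linear_sum[OF assms] linear_scale[OF assms])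
  then have "\<bar>L v\<bar> \<le> (\<Sum>b\<in>Basis. \<bar>v \<bullet> b\<bar> * \<bar>L b\<bar>)"
    by (simp add: abs_mult order_trans[OF sum_abs])
  also have "\<dots> \<le> (\<Sum>b\<in>Basis. norm v * \<bar>L b\<bar>)"
    by (intro sum_mono mult_right_mono Basis_le_norm) auto
  finally show ?thesis by (simp add: sum_distrib_left)
qed

lemma frechet_derivative_bounded_on_compact:
  fixes f :: "'a::euclidean_space \<Rightarrow> real"
  assumes "k_smooth (Suc k) f" "compact S"
  shows "\<exists>K\<ge>0. \<forall>x\<in>S. \<forall>v. \<bar>frechet_derivative f (at x) v\<bar> \<le> K * norm v"
proof -
  let ?B = "\<lambda>x. \<Sum>b\<in>Basis. \<bar>frechet_derivative f (at x) b\<bar>"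
  have "continuous_on UNIV (\<lambda>x. frechet_derivative f (at x) v)" for v
    using assms(1) k_smooth_imp_continuous_on by auto
  then have "continuous_on UNIV ?B"
    by (intro continuous_on_sum continuous_on_rabs)
  then have "compact (?B ` S)"
    using assms(2) by (metis compact_continuous_image continuous_on_subset subset_UNIV)
  then obtain K where "\<forall>y\<in>?B ` S. norm y \<le> K"
    using compact_imp_bounded bounded_iff by metis
  then have K: "\<forall>x\<in>S. ?B x \<le> K"
    by (auto intro: order_trans[OF abs_ge_self])
  have "\<bar>frechet_derivative f (at x) v\<bar> \<le> max K 0 * norm v" if "x \<in> S" for x v
  proof -
    have "linear (frechet_derivative f (at x))"
      using assms(1) differentiable_on_UNIV_frechet_derivative has_derivative_linear
      by (metis k_smooth.simps(2))
    then have "\<bar>frechet_derivative f (at x) v\<bar> \<le> norm v * ?B x"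
      by (rule abs_linear_le_Basis_sum)
    also have "\<dots> \<le> norm v * max K 0"
      using K that by (intro mult_left_mono) auto
    finally show ?thesis by (simp add: mult.commute)
  qed
  then show ?thesis by (intro exI[of _ "max K 0"]) auto
qed

lemma slice_derivative_bounded:
  fixes G :: "real \<times> (real^2) \<Rightarrow> real"
  assumes "smooth G" "time_periodic G"
  shows "\<exists>K\<ge>0. \<forall>t x v. norm x \<le> R \<longrightarrow>
           \<bar>frechet_derivative (\<lambda>y. G (t, y)) (at x) v\<bar> \<le> K * norm v"
proof -
  have G: "k_smooth (Suc 0) G" using assms(1) by (simp add: smooth_def)
  obtain K where "K \<ge> 0" and K: "\<forall>p\<in>{0..1} \<times> cball 0 R. \<forall>w.
      \<bar>frechet_derivative G (at p) w\<bar> \<le> K * norm w"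
    using frechet_derivative_bounded_on_compact[OF G compact_Times[OF compact_Icc compact_cball]]
    by blast
  have "\<bar>frechet_derivative (\<lambda>y. G (t, y)) (at x) v\<bar> \<le> K * norm v" if "norm x \<le> R" for t x v
  proof -
    have "(\<lambda>y. G (t, y)) = (\<lambda>y. G (frac t, y))"
      using time_periodic_frac[OF assms(2)] by auto
    then have "frechet_derivative (\<lambda>y. G (t, y)) (at x) v = frechet_derivative G (at (frac t, x)) (0, v)"
      using frechet_derivative_at[OF slice_has_derivative[OF smooth_imp_differentiable_on[OF assms(1)]],
          symmetric] by simp
    moreover have "(frac t, x) \<in> {0..1} \<times> cball 0 R"
      using that frac_lt_1[of t] by (simp add: less_imp_le)
    moreover have "norm (0::real, v) = norm v" by (simp add: norm_Pair)
    ultimately show ?thesis using K by metis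
  qed
  then show ?thesis using \<open>K \<ge> 0\<close> by blast
qed

lemma abs_le_dist_unit_sphere:
  fixes f :: "'a::{real_normed_vector, perfect_space} \<Rightarrow> real"
  assumes "\<And>y. norm y \<le> R \<Longrightarrow> (f has_derivative f' y) (at y)"
    and "\<And>y v. norm y \<le> R \<Longrightarrow> \<bar>f' y v\<bar> \<le> K * norm v"
    and "\<And>y. norm y = 1 \<Longrightarrow> f y = 0"
    and "1 \<le> norm x" "norm x \<le> R"
  shows "\<bar>f x\<bar> \<le> K * (norm x - 1)"
proof -
  define y where "y = (1 / norm x) *\<^sub>R x"
  have "x \<noteq> 0" using assms(4) by auto
  then have "norm y = 1" by (simp add: y_def)
  have "1 / norm x \<le> 1" using assms(4) by (simp add: divide_le_eq_1)
  have "norm (x - y) = norm ((1 - 1 / norm x) *\<^sub>R x)" by (simp add: y_def algebra_simps)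
  also have "\<dots> = norm x - 1"
    using \<open>1 / norm x \<le> 1\<close> \<open>x \<noteq> 0\<close> by (simp add: field_simps)
  finally have "norm (x - y) = norm x - 1" .
  moreover have "norm (f x - f y) \<le> K * norm (x - y)"
  proof (rule differentiable_bound[of "cball 0 R" f f'])
    show "convex (cball (0::'a) R)" "x \<in> cball 0 R" "y \<in> cball 0 R"
      using assms(4,5) \<open>norm y = 1\<close> by auto
  next
    fix z :: 'a
    assume "z \<in> cball 0 R"
    then show "(f has_derivative f' z) (at z within cball 0 R)"
      using assms(1) by (auto intro: has_derivative_at_withinI)
    show "onorm (f' z) \<le> K"
      using \<open>z \<in> cball 0 R\<close> assms(2) by (intro onorm_le) auto
  qed
  ultimately show ?thesis using assms(3) \<open>norm y = 1\<close> by simp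
qed

lemma slice_has_frechet_derivative:
  assumes "G differentiable_on UNIV"
  shows "((\<lambda>y. G (t, y)) has_derivative frechet_derivative (\<lambda>y. G (t, y)) (at x)) (at x)"
  using slice_has_derivative[OF assms] frechet_derivative_works differentiableI by blast

definition shell_coord :: "nat \<Rightarrow> 'a::real_inner \<Rightarrow> real" where
  "shell_coord n x = (real n + 1) * (x \<bullet> x - 1)"

definition cutoff_seq :: "(real \<times> (real^2) \<Rightarrow> real) \<Rightarrow> nat \<Rightarrow> real \<times> (real^2) \<Rightarrow> real" where
  "cutoff_seq G n p = G p * cutoff (shell_coord n (snd p))"

lemma k_smooth_shell_coord_snd: "k_smooth k (\<lambda>p::real \<times> (real^2). shell_coord n (snd p))"
proof -
  have "linear (\<lambda>p::real \<times> (real^2). snd p $ i)" for i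
    by (rule linearI) auto
  then have "k_smooth k (\<lambda>p::real \<times> (real^2).
      (real n + 1) * ((\<Sum>i\<in>UNIV. snd p $ i * snd p $ i) + (- 1)))"
    by (intro k_smooth_mult k_smooth_add k_smooth_sum k_smooth_const k_smooth_linear) auto
  then show ?thesis by (simp add: shell_coord_def inner_vec_def)
qed

lemma smooth_cutoff_seq: "smooth G \<Longrightarrow> smooth (cutoff_seq G n)"
  unfolding smooth_def cutoff_seq_def
  by (intro allI k_smooth_mult k_smooth_compose[OF open_UNIV UNIV_I
        k_smooth_imp_k_smooth_on[OF k_smooth_cutoff] k_smooth_shell_coord_snd]) auto

lemma time_periodic_cutoff_seq: "time_periodic G \<Longrightarrow> time_periodic (cutoff_seq G n)"
  by (simp add: time_periodic_def cutoff_seq_def)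

lemma cutoff_seq_eq_on_disc: "norm x \<le> 1 \<Longrightarrow> cutoff_seq G n (t, x) = G (t, x)"
  by (simp add: cutoff_seq_def shell_coord_def cutoff_eq_1 mult_nonneg_nonpos
      power2_norm_eq_inner[symmetric] power_le_one)

lemma norm_le_of_inner_self_le:
  fixes x :: "'a::real_inner"
  assumes "x \<bullet> x \<le> 1 + a" "0 \<le> a"
  shows "norm x \<le> 1 + a"
proof (rule power2_le_imp_le)
  have "1 + a \<le> (1 + a)\<^sup>2" using assms(2) by (simp add: power2_eq_square algebra_simps)
  then show "(norm x)\<^sup>2 \<le> (1 + a)\<^sup>2" using assms(1) by (simp add: power2_norm_eq_inner)
qed (use assms(2) in simp)

lemma supp_cutoff_seq: "supp (cutoff_seq G n) \<subseteq> UNIV \<times> cball 0 (1 + 1 / (real n + 1))"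
  unfolding supp_def
proof (rule closure_minimal)
  show "closed (UNIV \<times> cball (0::real^2) (1 + 1 / (real n + 1)))"
    by (simp add: closed_Times)
  show "{p. cutoff_seq G n p \<noteq> 0} \<subseteq> UNIV \<times> cball 0 (1 + 1 / (real n + 1))"
  proof
    fix p
    assume "p \<in> {p. cutoff_seq G n p \<noteq> 0}"
    then have "cutoff (shell_coord n (snd p)) \<noteq> 0" by (simp add: cutoff_seq_def)
    then have "shell_coord n (snd p) < 1" using cutoff_eq_0 not_less by blast
    then have "snd p \<bullet> snd p \<le> 1 + 1 / (real n + 1)" by (simp add: shell_coord_def field_simps)
    then show "p \<in> UNIV \<times> cball 0 (1 + 1 / (real n + 1))"
      using norm_le_of_inner_self_le[of "snd p" "1 / (real n + 1)"] by (simp add: mem_Times_iff)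
  qed
qed

lemma near_unit_sphere_bounds:
  fixes x :: "'a::real_inner"
  assumes "1 < norm x" "shell_coord n x \<le> 1"
  shows "norm x \<le> 2" "(real n + 1) * (norm x - 1) \<le> 1"
proof -
  define c where "c = real n + 1"
  have c: "c \<ge> 1" and le: "c * ((norm x)\<^sup>2 - 1) \<le> 1"
    using assms(2) by (simp_all add: c_def shell_coord_def power2_norm_eq_inner)
  have "norm x - 1 \<le> (norm x)\<^sup>2 - 1"
    using assms(1) mult_left_mono[of 1 "norm x" "norm x"] by (simp add: power2_eq_square)
  then have "c * (norm x - 1) \<le> c * ((norm x)\<^sup>2 - 1)" using c by (intro mult_left_mono) auto
  then show "(real n + 1) * (norm x - 1) \<le> 1" using le unfolding c_def by linarith
  have "(norm x)\<^sup>2 - 1 \<le> c * ((norm x)\<^sup>2 - 1)"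
    using c assms(1) \<open>norm x - 1 \<le> (norm x)\<^sup>2 - 1\<close> mult_right_mono[of 1 c "(norm x)\<^sup>2 - 1"]
    by simp
  then have "(norm x)\<^sup>2 \<le> 2\<^sup>2" using le by simp
  then show "norm x \<le> 2" by (rule power2_le_imp_le) simp
qed

lemma abs_cutoff_seq_le:
  assumes "K \<ge> 0"
    and G: "\<And>t x. 1 \<le> norm x \<Longrightarrow> norm x \<le> 2 \<Longrightarrow> \<bar>G (t, x)\<bar> \<le> K * (norm x - 1)"
    and "1 < norm x"
  shows "\<bar>cutoff_seq G n (t, x)\<bar> \<le> K / (real n + 1)"
proof (cases "shell_coord n x \<le> 1")
  case False
  then show ?thesis using assms(1) by (simp add: cutoff_seq_def cutoff_eq_0)
next
  case True
  note near = near_unit_sphere_bounds[OF assms(3) True]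
  have "\<bar>cutoff_seq G n (t, x)\<bar> \<le> \<bar>G (t, x)\<bar>"
    using abs_cutoff_le_1 by (simp add: cutoff_seq_def abs_mult mult_left_le)
  also have "\<dots> \<le> K * (norm x - 1)" using G assms(3) near(1) by simp
  also have "\<dots> \<le> K * (1 / (real n + 1))"
    using near(2) assms(1) by (intro mult_left_mono) (simp_all add: field_simps)
  finally show ?thesis by simp
qed

lemma approximating_sequence_cutoff_seq:
  assumes "smooth G" "time_periodic G" "\<And>t x. norm x \<le> 1 \<Longrightarrow> G (t, x) = H (t, x)"
    and "K \<ge> 0" "\<And>t x. 1 \<le> norm x \<Longrightarrow> norm x \<le> 2 \<Longrightarrow> \<bar>G (t, x)\<bar> \<le> K * (norm x - 1)"
  shows "approximating_sequence (cutoff_seq G) H"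
  unfolding approximating_sequence_def
proof (intro conjI allI impI)
  fix n
  show "smooth_compact_supp (cutoff_seq G n)"
    unfolding smooth_compact_supp_def
    using smooth_cutoff_seq[OF assms(1)] time_periodic_cutoff_seq[OF assms(2)] supp_cutoff_seq
    by blast
next
  fix n t and x :: "real^2"
  assume "norm x \<le> 1"
  then show "cutoff_seq G n (t, x) = H (t, x)" using assms(3) cutoff_seq_eq_on_disc by simp
next
  fix e :: real
  assume "e > 0"
  have "(\<lambda>n. K / real (Suc n)) \<longlonglongrightarrow> 0"
    using LIMSEQ_Suc[OF lim_const_over_n] .
  then have "eventually (\<lambda>n. K / real (Suc n) < e) sequentially"
    using \<open>e > 0\<close> by (rule order_tendstoD(2))
  then obtain N where N: "\<And>n. n \<ge> N \<Longrightarrow> K / real (Suc n) < e"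
    unfolding eventually_sequentially by blast
  show "\<exists>N. \<forall>n\<ge>N. \<forall>t x. norm x > 1 \<longrightarrow> \<bar>cutoff_seq G n (t, x)\<bar> \<le> e"
  proof (intro exI allI impI)
    fix n t and x :: "real^2"
    assume "N \<le> n" "1 < norm x"
    then show "\<bar>cutoff_seq G n (t, x)\<bar> \<le> e"
      using abs_cutoff_seq_le[OF assms(4,5) \<open>1 < norm x\<close>, of n t] N[of n] by (simp add: ac_simps)
  qed
qed

lemma norm_spatial_grad_le:
  assumes "\<And>v. \<bar>frechet_derivative (\<lambda>y. f (t, y)) (at x) v\<bar> \<le> B * norm v"
  shows "norm (spatial_grad f t x) \<le> 2 * B"
proof -
  have "\<bar>spatial_grad f t x $ i\<bar> \<le> B" for i
    using assms[of "axis i 1"] by (simp add: spatial_grad_def)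
  then have "(\<Sum>i\<in>UNIV. \<bar>spatial_grad f t x $ i\<bar>) \<le> of_nat (card (UNIV :: 2 set)) * B"
    by (intro sum_bounded_above)
  then show ?thesis using norm_le_l1_cart[of "spatial_grad f t x"] by simp
qed

lemma slice_cutoff_seq_has_derivative:
  assumes "G differentiable_on UNIV"
  shows "((\<lambda>y. cutoff_seq G n (t, y)) has_derivative (\<lambda>v.
      G (t, x) * (deriv cutoff (shell_coord n x) * ((real n + 1) * (2 * (x \<bullet> v))))
      + frechet_derivative (\<lambda>y. G (t, y)) (at x) v * cutoff (shell_coord n x))) (at x)"
proof -
  have "(shell_coord n has_derivative (\<lambda>v. (real n + 1) * (2 * (x \<bullet> v)))) (at x)"
    unfolding shell_coord_def[abs_def]
    by (auto intro!: derivative_eq_intros simp: inner_commute)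
  from has_derivative_compose[OF this cutoff_has_real_derivative[unfolded has_field_derivative_def]]
  have "((\<lambda>y. cutoff (shell_coord n y)) has_derivative
      (\<lambda>v. deriv cutoff (shell_coord n x) * ((real n + 1) * (2 * (x \<bullet> v))))) (at x)" .
  from has_derivative_mult[OF slice_has_frechet_derivative[OF assms] this]
  show ?thesis by (simp add: cutoff_seq_def)
qed

lemma abs_slice_derivative_cutoff_seq_le:
  assumes "G differentiable_on UNIV" "K \<ge> 0" "\<And>u. \<bar>deriv cutoff u\<bar> \<le> M"
    and G: "\<And>t x. 1 \<le> norm x \<Longrightarrow> norm x \<le> 2 \<Longrightarrow> \<bar>G (t, x)\<bar> \<le> K * (norm x - 1)"
    and dG: "\<And>t x v. norm x \<le> 2 \<Longrightarrow>
      \<bar>frechet_derivative (\<lambda>y. G (t, y)) (at x) v\<bar> \<le> K * norm v"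
    and "1 < norm x"
  shows "\<bar>frechet_derivative (\<lambda>y. cutoff_seq G n (t, y)) (at x) v\<bar> \<le> (4 * K * M + K) * norm v"
proof -
  define c where "c = real n + 1"
  define u where "u = shell_coord n x"
  have "0 \<le> M" using assms(3)[of 0] by linarith
  have "frechet_derivative (\<lambda>y. cutoff_seq G n (t, y)) (at x) v =
      G (t, x) * (deriv cutoff u * (c * (2 * (x \<bullet> v))))
      + frechet_derivative (\<lambda>y. G (t, y)) (at x) v * cutoff u"
    unfolding c_def u_def
    using frechet_derivative_at[OF slice_cutoff_seq_has_derivative[OF assms(1)], symmetric] by simp
  also have "\<bar>\<dots>\<bar> \<le> (4 * K * M + K) * norm v"
  proof (cases "u \<le> 1")
    case False
    then show ?thesis
      using assms(2) \<open>0 \<le> M\<close> deriv_cutoff_eq_0[of u] by (simp add: cutoff_eq_0)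
  next
    case True
    note near = near_unit_sphere_bounds[OF assms(6) True[unfolded u_def]]
    have "\<bar>G (t, x)\<bar> * c \<le> K * (norm x - 1) * c"
      using G[of x t] assms(6) near(1) by (simp add: c_def)
    also have "\<dots> \<le> K"
      using near(2) assms(2) mult_left_mono[of "c * (norm x - 1)" 1 K] by (simp add: c_def ac_simps)
    finally have "\<bar>G (t, x)\<bar> * c \<le> K" .
    moreover have "\<bar>2 * (x \<bullet> v)\<bar> \<le> 4 * norm v"
      using Cauchy_Schwarz_ineq2[of x v] near(1) mult_right_mono[of "norm x" 2 "norm v"] by simp
    ultimately have "(\<bar>G (t, x)\<bar> * c) * \<bar>deriv cutoff u\<bar> * \<bar>2 * (x \<bullet> v)\<bar> \<le> K * M * (4 * norm v)"
      using assms(2,3) \<open>0 \<le> M\<close> by (intro mult_mono) auto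
    moreover have "\<bar>G (t, x) * (deriv cutoff u * (c * (2 * (x \<bullet> v))))\<bar>
        = (\<bar>G (t, x)\<bar> * c) * \<bar>deriv cutoff u\<bar> * \<bar>2 * (x \<bullet> v)\<bar>"
      by (simp add: abs_mult c_def mult_ac)
    moreover have "\<bar>frechet_derivative (\<lambda>y. G (t, y)) (at x) v * cutoff u\<bar> \<le> K * norm v"
      using dG[OF near(1), of t v] abs_cutoff_le_1[of u] mult_mono[of _ "K * norm v" _ 1]
      by (simp add: abs_mult)
    moreover have "(4 * K * M + K) * norm v = K * M * (4 * norm v) + K * norm v"
      by (simp add: algebra_simps)
    ultimately show ?thesis by (smt (verit) abs_triangle_ineq)
  qed
  finally show ?thesis .
qed

theorem lemma3p5:
  fixes H :: "real \<times> (real^2) \<Rightarrow> real"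
  assumes "smooth_on_cyl_disc H"
    and "\<forall>t x. norm x = 1 \<longrightarrow> H (t, x) = 0"
  shows "\<exists>Hs. approximating_sequence Hs H \<and>
           (\<forall>n::nat. n \<ge> 1 \<longrightarrow> supp (Hs n) \<subseteq> UNIV \<times> cball 0 (1 + 1 / real n)) \<and>
           (\<exists>C. \<forall>n::nat. n \<ge> 1 \<longrightarrow> (\<forall>t x. norm x > 1 \<longrightarrow> norm (spatial_grad (Hs n) t x) \<le> C))"
proof -
  obtain G where G: "smooth G" "time_periodic G"
    and agree: "\<And>t x. norm x \<le> 1 \<Longrightarrow> G (t, x) = H (t, x)"
    using assms(1) unfolding smooth_on_cyl_disc_def by blast
  have dG: "G differentiable_on UNIV" using smooth_imp_differentiable_on[OF G(1)] .
  obtain K where "K \<ge> 0" and K: "\<And>t x v. norm x \<le> 2 \<Longrightarrow>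
      \<bar>frechet_derivative (\<lambda>y. G (t, y)) (at x) v\<bar> \<le> K * norm v"
    using slice_derivative_bounded[OF G] by blast
  have G_near_sphere: "\<bar>G (t, x)\<bar> \<le> K * (norm x - 1)" if "1 \<le> norm x" "norm x \<le> 2" for t x
    using abs_le_dist_unit_sphere[OF slice_has_frechet_derivative[OF dG] K _ that, of t]
      agree assms(2) by simp
  obtain M where M: "\<And>u. \<bar>deriv cutoff u\<bar> \<le> M"
    using deriv_cutoff_bounded by blast
  show ?thesis
  proof (intro exI[of _ "cutoff_seq G"] exI[of _ "2 * (4 * K * M + K)"] conjI allI impI)
    show "approximating_sequence (cutoff_seq G) H"
      using approximating_sequence_cutoff_seq[OF G agree \<open>K \<ge> 0\<close> G_near_sphere] .
  next
    fix n :: nat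
    assume "n \<ge> 1"
    then have "cball 0 (1 + 1 / (real n + 1)) \<subseteq> cball (0::real^2) (1 + 1 / real n)"
      by (intro subset_cball) (simp add: frac_le)
    then show "supp (cutoff_seq G n) \<subseteq> UNIV \<times> cball 0 (1 + 1 / real n)"
      using supp_cutoff_seq by blast
  next
    fix n t and x :: "real^2"
    assume "1 < norm x"
    then show "norm (spatial_grad (cutoff_seq G n) t x) \<le> 2 * (4 * K * M + K)"
      by (intro norm_spatial_grad_le abs_slice_derivative_cutoff_seq_le[OF dG \<open>K \<ge> 0\<close> M
            G_near_sphere K])
  qed
qed

end
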